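(* Let $\Omega\subset\mathbb{R}^N$ be a bounded open Lipschitz set. Then there exist constants $C_0=C_0(N,\Omega)>0$ and $\delta_0=\delta_0(N,\Omega)\in(0,1)$ such that $$\int_{\Omega\setminus B_\delta(x)}|x-y|^{-N-2s}\,dy\ge C_0\log\frac{\delta_0}{\delta}\qquad\text{for all }\delta\in(0,\delta_0),\ x\in\overline\Omega,\ s\in[0,1).$$
   Context: A bounded open set $\Omega\subset\mathbb{R}^N$ is a Lipschitz set if each boundary point has a neighborhood in which $\partial\Omega$ is, after rotation, the graph of a Lipschitz function. $B_\delta(x)$ denotes the open ball of radius $\delta$ centered at $x$. *)

theory Defs
  imports "HOL-Analysis.Analysis"
begin

definition is_lipschitz_set :: "'a::euclidean_space set \<Rightarrow> bool" where
  "is_lipschitz_set \<Omega> \<longleftrightarrow>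
     (\<forall>p\<in>frontier \<Omega>. \<exists>(U::'a set) (R::'a \<Rightarrow> 'a) (g::'a \<Rightarrow> real) (L::real) (e::'a).
        open U \<and> p \<in> U \<and> orthogonal_transformation R \<and> e \<in> Basis \<and>
        L-lipschitz_on {h. h \<bullet> e = 0} g \<and>
        frontier \<Omega> \<inter> U = R ` {h + g h *\<^sub>R e | h. h \<bullet> e = 0} \<inter> U)"

end

theory Submission
  imports Defs
begin

text \<open>
  A Lipschitz set satisfies a uniform interior corkscrew condition: there are \<kappa>, r > 0 such
  that for every x in the closure and every \<rho> < r some ball of radius \<kappa> \<rho> lies in
  \<Omega> \<inter> B(x, \<rho>). Near a boundary point such a ball is found inside a vertical cone
  with apex at a point y of \<Omega> close to x: a segment from y into the cone cannot cross the
  Lipschitz graph, hence never meets the frontier and stays in \<Omega>. Compactness of the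
  closure makes \<kappa> and r uniform, and shrinking the ball moves it away from x.

  For the scales \<rho>(k) = \<delta> / \<kappa>^k, k = 1, ..., n, with n \<ge> ln (\<delta>0 / \<delta>) / ln (1 / \<kappa>), the
  corkscrew balls lie in the disjoint annuli B(x, \<rho>(k)) - B(x, \<kappa> \<rho>(k)) \<subseteq> \<Omega> - B(x, \<delta>).
  On the k-th ball the kernel is at least \<rho>(k) powr (-N - 2s), and since \<rho>(k) \<le> 1 each ball
  contributes at least |B(0,1)| \<kappa>^N, which gives the logarithmic lower bound.
\<close>

section \<open>Interior corkscrew balls\<close>

definition corkscrew_on :: "'a::metric_space set \<Rightarrow> 'a set \<Rightarrow> real \<Rightarrow> real \<Rightarrow> bool" where
  "corkscrew_on A \<Omega> \<kappa> r \<longleftrightarrow>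
     (\<forall>x\<in>A. \<forall>\<rho>. 0 < \<rho> \<longrightarrow> \<rho> < r \<longrightarrow> (\<exists>z. ball z (\<kappa> * \<rho>) \<subseteq> \<Omega> \<inter> ball x \<rho>))"

lemma corkscrew_onD:
  "corkscrew_on A \<Omega> \<kappa> r \<Longrightarrow> x \<in> A \<Longrightarrow> 0 < \<rho> \<Longrightarrow> \<rho> < r \<Longrightarrow>
    \<exists>z. ball z (\<kappa> * \<rho>) \<subseteq> \<Omega> \<inter> ball x \<rho>"
  by (simp add: corkscrew_on_def)

lemma corkscrew_on_mono:
  assumes "corkscrew_on A \<Omega> \<kappa> r" "A' \<subseteq> A" "\<kappa>' \<le> \<kappa>" "r' \<le> r"
  shows "corkscrew_on A' \<Omega> \<kappa>' r'"
  unfolding corkscrew_on_def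
proof (intro ballI allI impI)
  fix x \<rho> assume "x \<in> A'" "0 < \<rho>" "\<rho> < r'"
  then obtain z where "ball z (\<kappa> * \<rho>) \<subseteq> \<Omega> \<inter> ball x \<rho>"
    using assms corkscrew_onD by (metis order_less_le_trans subsetD)
  moreover have "ball z (\<kappa>' * \<rho>) \<subseteq> ball z (\<kappa> * \<rho>)"
    using \<open>0 < \<rho>\<close> assms(3) by (intro subset_ball mult_right_mono) auto
  ultimately show "\<exists>z. ball z (\<kappa>' * \<rho>) \<subseteq> \<Omega> \<inter> ball x \<rho>" by blast
qed

lemma corkscrew_on_Un:
  assumes "corkscrew_on A \<Omega> \<kappa> r" "corkscrew_on B \<Omega> \<kappa>' r'"
  shows "corkscrew_on (A \<union> B) \<Omega> (min \<kappa> \<kappa>') (min r r')"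
  using corkscrew_on_mono[OF assms(1) order_refl, of "min \<kappa> \<kappa>'" "min r r'"]
    corkscrew_on_mono[OF assms(2) order_refl, of "min \<kappa> \<kappa>'" "min r r'"]
  by (auto simp: corkscrew_on_def)

lemma corkscrew_on_compact:
  assumes "compact K"
    and local: "\<And>q. q \<in> K \<Longrightarrow> \<exists>\<kappa>>0. \<exists>r>0. corkscrew_on (K \<inter> ball q r) \<Omega> \<kappa> r"
  shows "\<exists>\<kappa>>0. \<exists>r>0. corkscrew_on K \<Omega> \<kappa> r"
proof -
  obtain \<kappa> r where pos: "\<And>q. q \<in> K \<Longrightarrow> 0 < \<kappa> q \<and> 0 < r q"
    and cs: "\<And>q. q \<in> K \<Longrightarrow> corkscrew_on (K \<inter> ball q (r q)) \<Omega> (\<kappa> q) (r q)"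
    using local by metis
  obtain C where C: "C \<subseteq> K" "finite C" "K \<subseteq> (\<Union>q\<in>C. ball q (r q))"
    using compactE_image[OF assms(1), of K "\<lambda>q. ball q (r q)"] pos by force
  have "\<exists>k>0. \<exists>s>0. corkscrew_on (\<Union>q\<in>C'. K \<inter> ball q (r q)) \<Omega> k s"
    if "finite C'" "C' \<subseteq> C" for C'
    using that
  proof (induction C' rule: finite_induct)
    case empty
    show ?case by (auto simp: corkscrew_on_def intro: exI[of _ 1])
  next
    case (insert q C')
    then obtain \<kappa>' r' where "0 < \<kappa>'" "0 < r'" "corkscrew_on (\<Union>q\<in>C'. K \<inter> ball q (r q)) \<Omega> \<kappa>' r'"
      by auto
    moreover have "q \<in> K" using insert.prems C(1) by blast
    ultimately have "corkscrew_on (\<Union>q\<in>insert q C'. K \<inter> ball q (r q)) \<Omega> (min (\<kappa> q) \<kappa>') (min (r q) r')"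
      using corkscrew_on_Un[OF cs] by simp
    then show ?case
      using pos[OF \<open>q \<in> K\<close>] \<open>0 < \<kappa>'\<close> \<open>0 < r'\<close> by (intro exI conjI) auto
  qed
  moreover have "K = (\<Union>q\<in>C. K \<inter> ball q (r q))" using C(3) by blast
  ultimately show ?thesis using C(2) by (metis order_refl)
qed

lemma corkscrew_on_closure:
  assumes "corkscrew_on (\<Omega> \<inter> V) \<Omega> \<kappa> r" "open V"
  shows "corkscrew_on (closure \<Omega> \<inter> V) \<Omega> (\<kappa> / 2) r"
  unfolding corkscrew_on_def
proof (intro ballI allI impI)
  fix x \<rho> assume x: "x \<in> closure \<Omega> \<inter> V" and \<rho>: "0 < \<rho>" "\<rho> < r"
  have "x \<in> closure (\<Omega> \<inter> V)"
    using open_Int_closure_subset[OF assms(2), of \<Omega>] x by (auto simp: Int_commute)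
  then obtain y where y: "y \<in> \<Omega> \<inter> V" "dist y x < \<rho> / 2"
    using \<rho> unfolding closure_approachable by (metis half_gt_zero)
  then obtain z where z: "ball z (\<kappa> * (\<rho> / 2)) \<subseteq> \<Omega> \<inter> ball y (\<rho> / 2)"
    using corkscrew_onD[OF assms(1) y(1), of "\<rho> / 2"] \<rho> by auto
  have "ball y (\<rho> / 2) \<subseteq> ball x \<rho>"
    using y(2) unfolding subset_iff mem_ball by metric
  then show "\<exists>z. ball z (\<kappa> / 2 * \<rho>) \<subseteq> \<Omega> \<inter> ball x \<rho>"
    using z by (intro exI[of _ z]) auto
qed

lemma corkscrew_on_orthogonal_image:
  fixes R :: "'a::euclidean_space \<Rightarrow> 'a"
  assumes R: "orthogonal_transformation R" and cs: "corkscrew_on A \<Omega> \<kappa> r"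
  shows "corkscrew_on (R ` A) (R ` \<Omega>) \<kappa> r"
  unfolding corkscrew_on_def
proof (intro ballI allI impI)
  fix x \<rho> assume "x \<in> R ` A" "0 < \<rho>" "\<rho> < r"
  then obtain x' z where "x = R x'" "ball z (\<kappa> * \<rho>) \<subseteq> \<Omega> \<inter> ball x' \<rho>"
    using corkscrew_onD[OF cs] by blast
  then have "R ` ball z (\<kappa> * \<rho>) \<subseteq> R ` \<Omega> \<inter> R ` ball x' \<rho>" by blast
  then show "\<exists>z. ball z (\<kappa> * \<rho>) \<subseteq> R ` \<Omega> \<inter> ball x \<rho>"
    using \<open>x = R x'\<close> by (auto simp: image_orthogonal_transformation_ball[OF R])
qed

lemma exists_subball_avoiding:
  fixes x z :: "'a::euclidean_space"
  assumes "0 < a"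
  shows "\<exists>w. ball w (a / 4) \<subseteq> ball z a \<and> ball w (a / 4) \<inter> ball x (a / 4) = {}"
proof -
  obtain b :: 'a where b: "b \<in> Basis" using nonempty_Basis by blast
  define u where "u = (if 0 \<le> (z - x) \<bullet> b then b else - b)"
  have u: "norm u = 1" "u \<bullet> u = 1" "0 \<le> (z - x) \<bullet> u" using b by (auto simp: u_def)
  define w where "w = z + (a / 2) *\<^sub>R u"
  have "dist z w = a / 2" using u(1) assms by (simp add: w_def dist_norm)
  then have "ball w (a / 4) \<subseteq> ball z a" unfolding subset_iff mem_ball by metric
  moreover have "a / 2 \<le> dist x w"
  proof -
    have "a / 2 \<le> (w - x) \<bullet> u" using u by (simp add: w_def algebra_simps)
    also have "\<dots> \<le> norm (w - x)" using norm_cauchy_schwarz[of "w - x" u] u(1) by simp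
    finally show ?thesis by (simp add: dist_norm norm_minus_commute)
  qed
  then have "ball w (a / 4) \<inter> ball x (a / 4) = {}" unfolding disjoint_iff mem_ball by metric
  ultimately show ?thesis by blast
qed

lemma corkscrew_on_annular_ball:
  assumes "corkscrew_on A \<Omega> \<kappa> r" "x \<in> A" "0 < \<kappa>" "0 < \<rho>" "\<rho> < r"
  shows "\<exists>z::'a::euclidean_space. ball z (\<kappa> / 4 * \<rho>) \<subseteq> \<Omega> \<inter> ball x \<rho> \<and>
           ball z (\<kappa> / 4 * \<rho>) \<inter> ball x (\<kappa> / 4 * \<rho>) = {}"
proof -
  obtain z0 where "ball z0 (\<kappa> * \<rho>) \<subseteq> \<Omega> \<inter> ball x \<rho>" using corkscrew_onD[OF assms(1,2,4,5)] by blast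
  moreover obtain z where "ball z (\<kappa> * \<rho> / 4) \<subseteq> ball z0 (\<kappa> * \<rho>)"
      "ball z (\<kappa> * \<rho> / 4) \<inter> ball x (\<kappa> * \<rho> / 4) = {}"
    using exists_subball_avoiding[of "\<kappa> * \<rho>" z0 x] assms(3,4) by auto
  ultimately show ?thesis by (intro exI[of _ z]) auto
qed

section \<open>Lipschitz graphs\<close>

abbreviation proj_perp :: "'a::real_inner \<Rightarrow> 'a \<Rightarrow> 'a" where
  "proj_perp e v \<equiv> v - (v \<bullet> e) *\<^sub>R e"

definition graph_over :: "'a::euclidean_space \<Rightarrow> ('a \<Rightarrow> real) \<Rightarrow> 'a set" where
  "graph_over e g = {h + g h *\<^sub>R e | h. h \<bullet> e = 0}"

lemma mem_graph_over:
  assumes "e \<in> Basis"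
  shows "v \<in> graph_over e g \<longleftrightarrow> v \<bullet> e = g (proj_perp e v)"
proof
  assume "v \<in> graph_over e g"
  then obtain h where "h \<bullet> e = 0" "v = h + g h *\<^sub>R e" by (auto simp: graph_over_def)
  with assms show "v \<bullet> e = g (proj_perp e v)" by (simp add: inner_add_left)
next
  assume "v \<bullet> e = g (proj_perp e v)"
  moreover have "proj_perp e v \<bullet> e = 0" using assms by (simp add: inner_diff_left)
  ultimately show "v \<in> graph_over e g"
    unfolding graph_over_def by (intro CollectI exI[of _ "proj_perp e v"]) auto
qed

lemma norm_proj_perp_le:
  assumes "e \<in> Basis"
  shows "norm (proj_perp e v) \<le> 2 * norm v"
proof -
  have "norm (proj_perp e v) \<le> norm v + norm ((v \<bullet> e) *\<^sub>R e)" by (rule norm_triangle_ineq4)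
  also have "norm ((v \<bullet> e) *\<^sub>R e) = \<bar>v \<bullet> e\<bar>" using assms by simp
  also have "\<bar>v \<bullet> e\<bar> \<le> norm v" using assms by (rule Basis_le_norm)
  finally show ?thesis by simp
qed

lemma lipschitz_graph_cone:
  fixes e y v :: "'a::euclidean_space"
  assumes e: "e \<in> Basis" and lip: "L-lipschitz_on {h. h \<bullet> e = 0} g" and \<sigma>: "\<bar>\<sigma>\<bar> \<le> 1"
    and y: "0 \<le> \<sigma> * (y \<bullet> e - g (proj_perp e y))"
    and v: "L * norm (proj_perp e (v - y)) < \<sigma> * ((v - y) \<bullet> e)"
  shows "0 < \<sigma> * (v \<bullet> e - g (proj_perp e v))"
proof -
  have "\<bar>g (proj_perp e y) - g (proj_perp e v)\<bar> \<le> L * dist (proj_perp e y) (proj_perp e v)"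
    using lipschitz_onD[OF lip] e by (simp add: inner_diff_left dist_real_def)
  also have "dist (proj_perp e y) (proj_perp e v) = norm (proj_perp e (v - y))"
    by (simp add: dist_norm inner_diff_left algebra_simps) (rule norm_minus_commute)
  finally have "\<bar>\<sigma> * (g (proj_perp e y) - g (proj_perp e v))\<bar> \<le> L * norm (proj_perp e (v - y))"
    using \<sigma> by (simp add: abs_mult mult_le_one order_trans[OF mult_left_le_one_le])
  moreover have "\<sigma> * (v \<bullet> e - g (proj_perp e v)) = \<sigma> * ((v - y) \<bullet> e)
      + \<sigma> * (y \<bullet> e - g (proj_perp e y)) + \<sigma> * (g (proj_perp e y) - g (proj_perp e v))"
    by (simp add: inner_diff_left algebra_simps)
  ultimately show ?thesis using y v by linarith
qed

lemma cone_contains_ball: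
  fixes e y v :: "'a::euclidean_space"
  assumes e: "e \<in> Basis" and L: "0 \<le> L" and \<sigma>: "\<bar>\<sigma>\<bar> = 1"
    and v: "dist (y + (\<sigma> * t) *\<^sub>R e) v < t / (2 * L + 2)"
  shows "L * norm (proj_perp e (v - y)) < \<sigma> * ((v - y) \<bullet> e)"
proof -
  define w where "w = y + (\<sigma> * t) *\<^sub>R e"
  have v_y: "v - y = (v - w) + (\<sigma> * t) *\<^sub>R e" by (simp add: w_def)
  have "\<bar>\<sigma> * ((v - w) \<bullet> e)\<bar> \<le> norm (v - w)"
    using Basis_le_norm[OF e, of "v - w"] \<sigma> by (simp add: abs_mult)
  moreover have "\<sigma> * ((v - y) \<bullet> e) = \<sigma> * ((v - w) \<bullet> e) + t"
    using e \<sigma> abs_mult_self_eq[of \<sigma>] by (simp add: v_y inner_add_left algebra_simps)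
  moreover have "proj_perp e (v - y) = proj_perp e (v - w)"
    using e by (simp add: v_y inner_add_left algebra_simps)
  then have "L * norm (proj_perp e (v - y)) \<le> 2 * (L * norm (v - w))"
    by (metis mult_left_mono[OF norm_proj_perp_le[OF e] L] mult.left_commute)
  moreover have "(2 * L + 2) * norm (v - w) < t"
    using v L by (simp add: w_def dist_norm norm_minus_commute field_simps)
  ultimately show ?thesis by (simp add: algebra_simps)
qed

lemma cone_closed_segment:
  fixes e y v u :: "'a::real_inner"
  assumes v: "L * norm (proj_perp e (v - y)) < \<sigma> * ((v - y) \<bullet> e)"
    and u: "u \<in> closed_segment y v" "u \<noteq> y"
  shows "L * norm (proj_perp e (u - y)) < \<sigma> * ((u - y) \<bullet> e)"
proof -
  from u obtain c where c: "0 \<le> c" "u = (1 - c) *\<^sub>R y + c *\<^sub>R v"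
    unfolding closed_segment_def by blast
  then have u_y: "u - y = c *\<^sub>R (v - y)" by (simp add: algebra_simps)
  then have "0 < c" using c(1) u(2) by (cases "c = 0") auto
  have "proj_perp e (u - y) = c *\<^sub>R proj_perp e (v - y)"
    by (simp add: u_y algebra_simps)
  then have "L * norm (proj_perp e (u - y)) = c * (L * norm (proj_perp e (v - y)))"
    using c(1) by simp
  also have "\<dots> < c * (\<sigma> * ((v - y) \<bullet> e))"
    using v \<open>0 < c\<close> by simp
  also have "\<dots> = \<sigma> * ((u - y) \<bullet> e)"
    unfolding u_y by simp
  finally show ?thesis .
qed

lemma cone_point_in_open:
  fixes \<Omega> :: "'a::euclidean_space set"
  assumes "open \<Omega>" and e: "e \<in> Basis" and lip: "L-lipschitz_on {h. h \<bullet> e = 0} g" and "y \<in> \<Omega>"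
    and \<sigma>: "\<bar>\<sigma>\<bar> = 1" "0 \<le> \<sigma> * (y \<bullet> e - g (proj_perp e y))"
    and cone: "L * norm (proj_perp e (v - y)) < \<sigma> * ((v - y) \<bullet> e)"
    and frontier: "frontier \<Omega> \<inter> closed_segment y v \<subseteq> graph_over e g"
  shows "v \<in> \<Omega>"
proof -
  have "u \<notin> frontier \<Omega>" if u: "u \<in> closed_segment y v" for u
  proof (cases "u = y")
    case True
    then show ?thesis using \<open>y \<in> \<Omega>\<close> \<open>open \<Omega>\<close> by (simp add: frontier_def interior_open)
  next
    case False
    then have "0 < \<sigma> * (u \<bullet> e - g (proj_perp e u))"
      using lipschitz_graph_cone[OF e lip _ \<sigma>(2) cone_closed_segment[OF cone u]] \<sigma>(1) by simp
    then have "u \<notin> graph_over e g" using mem_graph_over[OF e] by force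
    then show ?thesis using frontier u by blast
  qed
  then have "closed_segment y v \<subseteq> \<Omega>"
    using connected_Int_frontier[OF connected_segment, of y v \<Omega>] \<open>y \<in> \<Omega>\<close> by blast
  then show "v \<in> \<Omega>" by auto
qed

lemma corkscrew_near_lipschitz_graph:
  fixes \<Omega> :: "'a::euclidean_space set"
  assumes "open \<Omega>" and e: "e \<in> Basis" and lip: "L-lipschitz_on {h. h \<bullet> e = 0} g"
    and frontier: "frontier \<Omega> \<inter> ball p \<beta> \<subseteq> graph_over e g"
  shows "corkscrew_on (\<Omega> \<inter> ball p (\<beta> / 2)) \<Omega> (1 / (4 * L + 4)) (\<beta> / 2)"
  unfolding corkscrew_on_def
proof (intro ballI allI impI)
  fix y \<rho> assume y: "y \<in> \<Omega> \<inter> ball p (\<beta> / 2)" and \<rho>: "0 < \<rho>" "\<rho> < \<beta> / 2"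
  have L: "0 \<le> L" using lip by (rule lipschitz_on_nonneg)
  define \<sigma> :: real where "\<sigma> = (if g (proj_perp e y) \<le> y \<bullet> e then 1 else -1)"
  have \<sigma>: "\<bar>\<sigma>\<bar> = 1" "0 \<le> \<sigma> * (y \<bullet> e - g (proj_perp e y))"
    by (auto simp: \<sigma>_def)
  define w where "w = y + (\<sigma> * (\<rho> / 2)) *\<^sub>R e"
  define s where "s = \<rho> / 2 / (2 * L + 2)"
  have "dist y w = \<rho> / 2" using e \<sigma>(1) \<rho>(1) by (simp add: w_def dist_norm abs_mult)
  moreover have "s \<le> \<rho> / 2" using \<rho> L by (simp add: s_def field_simps)
  ultimately have ball_w: "ball w s \<subseteq> ball y \<rho>" unfolding subset_iff mem_ball by metric
  have "ball y \<rho> \<subseteq> ball p \<beta>"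
    using y \<rho> unfolding subset_iff mem_ball Int_iff by metric
  have "v \<in> \<Omega>" if "v \<in> ball w s" for v
  proof (rule cone_point_in_open[OF \<open>open \<Omega>\<close> e lip _ \<sigma>])
    show "y \<in> \<Omega>" using y by blast
    show "L * norm (proj_perp e (v - y)) < \<sigma> * ((v - y) \<bullet> e)"
      using that unfolding w_def s_def mem_ball by (rule cone_contains_ball[OF e L \<sigma>(1)])
    have "closed_segment y v \<subseteq> ball p \<beta>"
      using ball_w that \<rho> \<open>ball y \<rho> \<subseteq> ball p \<beta>\<close> by (meson centre_in_ball closed_segment_subset
          convex_ball subset_iff)
    then show "frontier \<Omega> \<inter> closed_segment y v \<subseteq> graph_over e g" using frontier by blast
  qed
  then show "\<exists>z. ball z (1 / (4 * L + 4) * \<rho>) \<subseteq> \<Omega> \<inter> ball y \<rho>"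
    using ball_w by (intro exI[of _ w]) (auto simp: s_def)
qed

section \<open>Corkscrew balls in Lipschitz sets\<close>

lemma frontier_injective_linear_image:
  fixes f :: "'a::euclidean_space \<Rightarrow> 'a"
  assumes "linear f" "inj f"
  shows "frontier (f ` S) = f ` frontier S"
  using assms
  by (simp add: frontier_def closure_injective_linear_image[symmetric]
      interior_injective_linear_image image_set_diff)

lemma corkscrew_near_rotated_lipschitz_graph:
  fixes \<Omega> :: "'a::euclidean_space set" and R :: "'a \<Rightarrow> 'a"
  assumes "open \<Omega>" and R: "orthogonal_transformation R" and "e \<in> Basis"
    and "L-lipschitz_on {h. h \<bullet> e = 0} g"
    and frontier: "frontier \<Omega> \<inter> ball q \<beta> \<subseteq> R ` graph_over e g"
  shows "corkscrew_on (\<Omega> \<inter> ball q (\<beta> / 2)) \<Omega> (1 / (4 * L + 4)) (\<beta> / 2)"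
proof -
  have "linear R" "inj R" "surj R"
    by (fact orthogonal_transformation_linear[OF R] orthogonal_transformation_inj[OF R]
        orthogonal_transformation_surj[OF R])+
  define T where "T = inv R"
  have T: "linear T" "inj T" "\<And>x. R (T x) = x"
    using orthogonal_transformation_inv[OF R] \<open>surj R\<close>
    by (auto simp: T_def surj_f_inv_f orthogonal_transformation_linear orthogonal_transformation_inj)
  have "open (T ` \<Omega>)"
    using interior_injective_linear_image[OF T(1,2), of \<Omega>] \<open>open \<Omega>\<close>
    by (simp add: interior_open interior_eq)
  moreover have "frontier (T ` \<Omega>) \<inter> ball (T q) \<beta> \<subseteq> graph_over e g"
  proof
    fix v assume v: "v \<in> frontier (T ` \<Omega>) \<inter> ball (T q) \<beta>"
    then have "R v \<in> frontier \<Omega>"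
      using frontier_injective_linear_image[OF T(1,2)] T(3) by auto
    moreover have "R v \<in> ball q \<beta>"
      using v image_orthogonal_transformation_ball[OF R, of "T q" \<beta>] T(3) by auto
    ultimately have "R v \<in> R ` graph_over e g" using frontier by blast
    then show "v \<in> graph_over e g" using \<open>inj R\<close> by (auto dest: injD)
  qed
  ultimately have "corkscrew_on (T ` \<Omega> \<inter> ball (T q) (\<beta> / 2)) (T ` \<Omega>) (1 / (4 * L + 4)) (\<beta> / 2)"
    using corkscrew_near_lipschitz_graph assms(3,4) by blast
  then have "corkscrew_on (R ` (T ` \<Omega> \<inter> ball (T q) (\<beta> / 2))) (R ` T ` \<Omega>) (1 / (4 * L + 4)) (\<beta> / 2)"
    by (rule corkscrew_on_orthogonal_image[OF R])
  moreover have "R ` (T ` \<Omega> \<inter> ball (T q) (\<beta> / 2)) = \<Omega> \<inter> ball q (\<beta> / 2)"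
    by (simp add: image_Int[OF \<open>inj R\<close>] image_image T(3) image_orthogonal_transformation_ball[OF R])
  ultimately show ?thesis by (simp add: image_image T(3))
qed

lemma lipschitz_set_locally_corkscrew:
  fixes \<Omega> :: "'a::euclidean_space set"
  assumes "open \<Omega>" "is_lipschitz_set \<Omega>" "q \<in> closure \<Omega>"
  shows "\<exists>\<kappa>>0. \<exists>r>0. corkscrew_on (closure \<Omega> \<inter> ball q r) \<Omega> \<kappa> r"
proof (cases "q \<in> \<Omega>")
  case True
  then obtain \<eta> where \<eta>: "0 < \<eta>" "ball q \<eta> \<subseteq> \<Omega>" using \<open>open \<Omega>\<close> open_contains_ball by blast
  have "corkscrew_on (closure \<Omega> \<inter> ball q (\<eta> / 2)) \<Omega> 1 (\<eta> / 2)"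
    unfolding corkscrew_on_def
  proof (intro ballI allI impI exI)
    fix x \<rho> assume "x \<in> closure \<Omega> \<inter> ball q (\<eta> / 2)" "0 < \<rho>" "\<rho> < \<eta> / 2"
    then have "ball x \<rho> \<subseteq> ball q \<eta>" unfolding subset_iff mem_ball Int_iff by metric
    then show "ball x (1 * \<rho>) \<subseteq> \<Omega> \<inter> ball x \<rho>" using \<eta>(2) by auto
  qed
  then show ?thesis using \<eta>(1) by (metis half_gt_zero zero_less_one)
next
  case False
  then have "q \<in> frontier \<Omega>" using assms(1,3) by (simp add: frontier_def interior_open)
  then obtain U R g L and e :: 'a where chart: "open U" "q \<in> U" "orthogonal_transformation R"
      "e \<in> Basis" "L-lipschitz_on {h. h \<bullet> e = 0} g" "frontier \<Omega> \<inter> U = R ` graph_over e g \<inter> U"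
  proof -
    have "\<exists>U (R :: 'a \<Rightarrow> 'a) g L (e :: 'a). open U \<and> q \<in> U \<and> orthogonal_transformation R \<and>
        e \<in> Basis \<and> L-lipschitz_on {h. h \<bullet> e = 0} g \<and> frontier \<Omega> \<inter> U = R ` graph_over e g \<inter> U"
      using assms(2) \<open>q \<in> frontier \<Omega>\<close> unfolding is_lipschitz_set_def graph_over_def by (rule bspec)
    then show thesis by (elim exE conjE) (rule that; assumption)
  qed
  obtain \<beta> where \<beta>: "0 < \<beta>" "ball q \<beta> \<subseteq> U" using chart(1,2) open_contains_ball by blast
  then have "frontier \<Omega> \<inter> ball q \<beta> \<subseteq> R ` graph_over e g" using chart(6) by blast
  then have "corkscrew_on (\<Omega> \<inter> ball q (\<beta> / 2)) \<Omega> (1 / (4 * L + 4)) (\<beta> / 2)"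
    using corkscrew_near_rotated_lipschitz_graph[OF assms(1) chart(3,4,5)] by blast
  then have "corkscrew_on (closure \<Omega> \<inter> ball q (\<beta> / 2)) \<Omega> (1 / (4 * L + 4) / 2) (\<beta> / 2)"
    by (rule corkscrew_on_closure) simp
  moreover have "0 < 1 / (4 * L + 4) / 2"
    using lipschitz_on_nonneg[OF chart(5)] by simp
  ultimately show ?thesis using \<beta>(1) half_gt_zero by blast
qed

lemma lipschitz_set_corkscrew:
  fixes \<Omega> :: "'a::euclidean_space set"
  assumes "bounded \<Omega>" "open \<Omega>" "is_lipschitz_set \<Omega>"
  shows "\<exists>\<kappa>>0. \<exists>r>0. corkscrew_on (closure \<Omega>) \<Omega> \<kappa> r"
  using corkscrew_on_compact[OF compact_closure[THEN iffD2, OF assms(1)]]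
    lipschitz_set_locally_corkscrew[OF assms(2,3)] by blast

lemma lipschitz_set_annular_balls:
  fixes \<Omega> :: "'a::euclidean_space set"
  assumes "bounded \<Omega>" "open \<Omega>" "is_lipschitz_set \<Omega>"
  obtains \<kappa> r where "0 < \<kappa>" "\<kappa> < 1" "0 < r" "r \<le> 1"
    "\<And>x \<rho>. x \<in> closure \<Omega> \<Longrightarrow> 0 < \<rho> \<Longrightarrow> \<rho> < r \<Longrightarrow>
       \<exists>z. ball z (\<kappa> * \<rho>) \<subseteq> \<Omega> \<inter> ball x \<rho> \<and> ball z (\<kappa> * \<rho>) \<inter> ball x (\<kappa> * \<rho>) = {}"
proof -
  obtain \<kappa> r where "0 < \<kappa>" "0 < r" and corkscrew: "corkscrew_on (closure \<Omega>) \<Omega> \<kappa> r"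
    using lipschitz_set_corkscrew[OF assms] by blast
  have shrunk: "corkscrew_on (closure \<Omega>) \<Omega> (min \<kappa> 1) (min r 1)"
    using corkscrew by (rule corkscrew_on_mono) auto
  show thesis
  proof (rule that[of "min \<kappa> 1 / 4" "min r 1"])
    fix x \<rho> assume "x \<in> closure \<Omega>" "0 < \<rho>" "\<rho> < min r 1"
    then show "\<exists>z. ball z (min \<kappa> 1 / 4 * \<rho>) \<subseteq> \<Omega> \<inter> ball x \<rho> \<and>
        ball z (min \<kappa> 1 / 4 * \<rho>) \<inter> ball x (min \<kappa> 1 / 4 * \<rho>) = {}"
      using corkscrew_on_annular_ball[OF shrunk] \<open>0 < \<kappa>\<close> by simp
  qed (use \<open>0 < \<kappa>\<close> \<open>0 < r\<close> in auto)
qed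

section \<open>The truncated Riesz kernel integral\<close>

lemma norm_diff_powr_integrable_on:
  fixes x :: "'a::euclidean_space"
  assumes T: "T \<in> lmeasurable" and "0 < \<delta>" and far: "\<And>y. y \<in> T \<Longrightarrow> \<delta> \<le> norm (x - y)" and "a \<le> 0"
  shows "(\<lambda>y. norm (x - y) powr a) integrable_on T"
proof (rule measurable_bounded_by_integrable_imp_integrable_real)
  show "T \<in> sets lebesgue" using T by (rule fmeasurableD)
  have "continuous_on T (\<lambda>y. norm (x - y) powr a)"
    using far \<open>0 < \<delta>\<close> by (intro continuous_intros) force
  then show "(\<lambda>y. norm (x - y) powr a) \<in> borel_measurable (lebesgue_on T)"
    using \<open>T \<in> sets lebesgue\<close> by (rule continuous_imp_measurable_on_sets_lebesgue)
  show "(\<lambda>_. \<delta> powr a) integrable_on T" using T by (rule integrable_on_const)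
  fix y assume "y \<in> T"
  then show "\<bar>norm (x - y) powr a\<bar> \<le> \<delta> powr a"
    using far \<open>0 < \<delta>\<close> \<open>a \<le> 0\<close> by (simp add: powr_mono2')
qed

lemma integral_norm_diff_powr_ball_ge:
  fixes x z :: "'a::euclidean_space"
  assumes ball: "ball z r \<subseteq> ball x \<rho> - ball x \<epsilon>" and "0 < \<epsilon>" "0 \<le> r" "a \<le> 0"
  shows "\<rho> powr a * (r ^ DIM('a) * measure lborel (ball (0::'a) 1))
           \<le> integral (ball z r) (\<lambda>y. norm (x - y) powr a)"
proof -
  have far: "\<epsilon> \<le> norm (x - y)" and near: "norm (x - y) < \<rho>" if "y \<in> ball z r" for y
    using ball that by (auto simp: dist_norm)
  have "\<rho> powr a * (r ^ DIM('a) * measure lborel (ball (0::'a) 1)) = integral (ball z r) (\<lambda>_. \<rho> powr a)"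
    using lmeasure_integral[of "ball z r"] integral_mult_right[of "ball z r" "\<rho> powr a" "\<lambda>_. 1"]
      content_ball_conv_unit_ball[OF \<open>0 \<le> r\<close>, of z] by simp
  also have "\<dots> \<le> integral (ball z r) (\<lambda>y. norm (x - y) powr a)"
  proof (rule integral_le)
    show "(\<lambda>_. \<rho> powr a) integrable_on ball z r" by (simp add: integrable_on_const)
    show "(\<lambda>y. norm (x - y) powr a) integrable_on ball z r"
      using far \<open>0 < \<epsilon>\<close> \<open>a \<le> 0\<close> by (intro norm_diff_powr_integrable_on) auto
    fix y assume "y \<in> ball z r"
    then show "\<rho> powr a \<le> norm (x - y) powr a"
      using far[of y] near[of y] \<open>0 < \<epsilon>\<close> \<open>a \<le> 0\<close> by (intro powr_mono2') auto
  qed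
  finally show ?thesis .
qed

lemma integral_norm_diff_powr_scaled_ball_ge:
  fixes x z :: "'a::euclidean_space"
  assumes ball: "ball z (\<kappa> * \<rho>) \<subseteq> ball x \<rho> - ball x \<epsilon>"
    and "0 < \<epsilon>" "0 \<le> \<kappa>" "0 < \<rho>" "\<rho> \<le> 1" "0 \<le> s"
  shows "measure lborel (ball (0::'a) 1) * \<kappa> ^ DIM('a)
           \<le> integral (ball z (\<kappa> * \<rho>)) (\<lambda>y. norm (x - y) powr (- real DIM('a) - 2 * s))"
proof -
  define c where "c = measure lborel (ball (0::'a) 1) * \<kappa> ^ DIM('a)"
  have "1 \<le> \<rho> powr (- 2 * s)"
    using powr_mono2'[of "- 2 * s" \<rho> 1] assms(4-6) by simp
  then have "c \<le> c * \<rho> powr (- 2 * s)"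
    using mult_left_mono[of 1 _ c] \<open>0 \<le> \<kappa>\<close> by (simp add: c_def)
  also have "\<dots> = \<rho> powr (- real DIM('a) - 2 * s) * ((\<kappa> * \<rho>) ^ DIM('a) * measure lborel (ball (0::'a) 1))"
    using \<open>0 < \<rho>\<close> by (simp add: c_def powr_diff powr_minus powr_realpow power_mult_distrib field_simps)
  also have "\<dots> \<le> integral (ball z (\<kappa> * \<rho>)) (\<lambda>y. norm (x - y) powr (- real DIM('a) - 2 * s))"
    using assms by (intro integral_norm_diff_powr_ball_ge) auto
  finally show ?thesis by (simp add: c_def)
qed

lemma sum_integral_disjoint_le_integral:
  fixes f :: "'a::euclidean_space \<Rightarrow> real"
  assumes "finite I" "disjoint_family_on B I" "\<And>i. i \<in> I \<Longrightarrow> B i \<subseteq> S"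
    and "\<And>i. i \<in> I \<Longrightarrow> f integrable_on B i" "f integrable_on S" "\<And>y. y \<in> S \<Longrightarrow> 0 \<le> f y"
  shows "(\<Sum>i\<in>I. integral (B i) f) \<le> integral S f"
proof -
  have "(f has_integral (\<Sum>i\<in>I. integral (B i) f)) (\<Union>i\<in>I. B i)"
    using assms(1,2,4) by (intro has_integral_UN) (auto simp: pairwise_def disjoint_family_on_def)
  moreover have "(\<Union>i\<in>I. B i) \<subseteq> S" using assms(3) by blast
  ultimately show ?thesis
    using integral_subset_le assms(5,6) by (metis has_integral_integrable_integral)
qed

lemma exists_nat_ge_ln_ratio:
  assumes "0 < \<kappa>" "\<kappa> < 1" "0 < \<delta>" "\<delta> \<le> b"
  shows "\<exists>n::nat. ln (b / \<delta>) / ln (1 / \<kappa>) \<le> n \<and> \<delta> / \<kappa> ^ n \<le> b / \<kappa>"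
proof -
  define a where "a = ln (b / \<delta>) / ln (1 / \<kappa>)"
  have "0 \<le> a" using assms by (simp add: a_def)
  define n where "n = nat \<lceil>a\<rceil>"
  have n: "a \<le> n" "n \<le> a + 1" using \<open>0 \<le> a\<close> by (auto simp: n_def)
  have "(1 / \<kappa>) ^ n = (1 / \<kappa>) powr n" using assms by (simp add: powr_realpow)
  also have "\<dots> \<le> (1 / \<kappa>) powr (a + 1)" using n assms by (intro powr_mono) auto
  also have "\<dots> = (1 / \<kappa>) powr a * (1 / \<kappa>)" using assms by (simp add: powr_add)
  also have "(1 / \<kappa>) powr a = b / \<delta>" using assms by (simp add: powr_def a_def)
  finally have "\<delta> * (1 / \<kappa>) ^ n \<le> \<delta> * (b / \<delta> / \<kappa>)" using assms by (intro mult_left_mono) auto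
  then show ?thesis using n(1) assms by (intro exI[of _ n]) (simp add: a_def power_one_over)
qed

lemma exists_disjoint_annular_balls:
  fixes x :: "'a::metric_space"
  assumes \<kappa>: "0 < \<kappa>" "\<kappa> < 1" and "0 < \<delta>" and "\<delta> / \<kappa> ^ n < r"
    and annuli: "\<And>\<rho>. 0 < \<rho> \<Longrightarrow> \<rho> < r \<Longrightarrow>
      \<exists>z. ball z (\<kappa> * \<rho>) \<subseteq> \<Omega> \<inter> ball x \<rho> \<and> ball z (\<kappa> * \<rho>) \<inter> ball x (\<kappa> * \<rho>) = {}"
  shows "\<exists>Z. disjoint_family_on (\<lambda>k. ball (Z k) (\<kappa> * (\<delta> / \<kappa> ^ k))) {1..n} \<and>
           (\<forall>k\<in>{1..n}. \<delta> / \<kappa> ^ k < r \<and>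
              ball (Z k) (\<kappa> * (\<delta> / \<kappa> ^ k)) \<subseteq> \<Omega> \<inter> ball x (\<delta> / \<kappa> ^ k) - ball x \<delta>)"
proof -
  define \<rho> where "\<rho> k = \<delta> / \<kappa> ^ k" for k
  have \<rho>_pos: "0 < \<rho> k" for k using \<open>0 < \<delta>\<close> \<kappa> by (simp add: \<rho>_def)
  have \<rho>_mono: "\<rho> j \<le> \<rho> k" if "j \<le> k" for j k
    using \<open>0 < \<delta>\<close> \<kappa> power_decreasing[OF that, of \<kappa>] by (simp add: \<rho>_def divide_left_mono)
  have \<rho>_Suc: "\<kappa> * \<rho> (Suc k) = \<rho> k" for k using \<kappa> by (simp add: \<rho>_def)
  have "\<rho> n < r" using assms(4) by (simp add: \<rho>_def)
  have \<rho>_less: "\<rho> k < r" if "k \<in> {1..n}" for k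
    using order_le_less_trans[OF \<rho>_mono \<open>\<rho> n < r\<close>] that by simp
  then have "\<exists>z. ball z (\<kappa> * \<rho> k) \<subseteq> \<Omega> \<inter> ball x (\<rho> k) \<and> ball z (\<kappa> * \<rho> k) \<inter> ball x (\<kappa> * \<rho> k) = {}"
    if "k \<in> {1..n}" for k
    using annuli[OF \<rho>_pos] that by blast
  then obtain Z where Z: "\<And>k. k \<in> {1..n} \<Longrightarrow> ball (Z k) (\<kappa> * \<rho> k) \<subseteq> \<Omega> \<inter> ball x (\<rho> k) \<and>
      ball (Z k) (\<kappa> * \<rho> k) \<inter> ball x (\<kappa> * \<rho> k) = {}"
    by metis
  have inner: "ball x (\<rho> j) \<subseteq> ball x (\<kappa> * \<rho> k)" if jk: "j < k" for j k
  proof -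
    obtain i where "k = Suc i" "j \<le> i" using jk by (cases k) auto
    then show ?thesis using \<rho>_mono \<rho>_Suc by (intro subset_ball) auto
  qed
  have annulus: "ball (Z k) (\<kappa> * \<rho> k) \<subseteq> \<Omega> \<inter> ball x (\<rho> k) - ball x \<delta>" if "k \<in> {1..n}" for k
    using Z[OF that] inner[of 0 k] that by (auto simp: \<rho>_def)
  have "ball (Z j) (\<kappa> * \<rho> j) \<inter> ball (Z k) (\<kappa> * \<rho> k) = {}"
    if "j \<in> {1..n}" "k \<in> {1..n}" "j < k" for j k
    using Z[OF that(2)] annulus[OF that(1)] inner[OF that(3)] by auto
  then have "disjoint_family_on (\<lambda>k. ball (Z k) (\<kappa> * \<rho> k)) {1..n}"
    unfolding disjoint_family_on_def by (metis Int_commute linorder_neqE_nat)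
  with annulus \<rho>_less show ?thesis unfolding \<rho>_def by blast
qed

lemma integral_norm_diff_powr_ge_card_scales:
  fixes \<Omega> :: "'a::euclidean_space set" and x :: 'a
  assumes \<Omega>: "\<Omega> \<in> lmeasurable" and \<kappa>: "0 < \<kappa>" "\<kappa> < 1" and "r \<le> 1"
    and annuli: "\<And>\<rho>. 0 < \<rho> \<Longrightarrow> \<rho> < r \<Longrightarrow>
      \<exists>z. ball z (\<kappa> * \<rho>) \<subseteq> \<Omega> \<inter> ball x \<rho> \<and> ball z (\<kappa> * \<rho>) \<inter> ball x (\<kappa> * \<rho>) = {}"
    and "0 < \<delta>" "\<delta> / \<kappa> ^ n < r" "0 \<le> s"
  shows "measure lborel (ball (0::'a) 1) * \<kappa> ^ DIM('a) * n
           \<le> integral (\<Omega> - ball x \<delta>) (\<lambda>y. norm (x - y) powr (- real DIM('a) - 2 * s))"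
proof -
  define f where "f = (\<lambda>y. norm (x - y) powr (- real DIM('a) - 2 * s))"
  define S where "S = \<Omega> - ball x \<delta>"
  obtain Z where disjoint: "disjoint_family_on (\<lambda>k. ball (Z k) (\<kappa> * (\<delta> / \<kappa> ^ k))) {1..n}"
    and scale: "\<And>k. k \<in> {1..n} \<Longrightarrow> \<delta> / \<kappa> ^ k < r"
    and B: "\<And>k. k \<in> {1..n} \<Longrightarrow> ball (Z k) (\<kappa> * (\<delta> / \<kappa> ^ k)) \<subseteq> \<Omega> \<inter> ball x (\<delta> / \<kappa> ^ k) - ball x \<delta>"
    using exists_disjoint_annular_balls[OF \<kappa> \<open>0 < \<delta>\<close> \<open>\<delta> / \<kappa> ^ n < r\<close> annuli] by blast
  have integrable: "f integrable_on T" if "T \<in> lmeasurable" "T \<subseteq> S" for T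
    using that \<open>0 < \<delta>\<close> \<open>0 \<le> s\<close> unfolding f_def
    by (intro norm_diff_powr_integrable_on[where \<delta> = \<delta>]) (auto simp: S_def dist_norm)
  have "S \<in> lmeasurable" unfolding S_def using \<Omega> by (intro fmeasurable_Diff) auto
  have "measure lborel (ball (0::'a) 1) * \<kappa> ^ DIM('a) * n
      = (\<Sum>k\<in>{1..n}. measure lborel (ball (0::'a) 1) * \<kappa> ^ DIM('a))" by simp
  also have "\<dots> \<le> (\<Sum>k\<in>{1..n}. integral (ball (Z k) (\<kappa> * (\<delta> / \<kappa> ^ k))) f)"
  proof (rule sum_mono)
    fix k assume k: "k \<in> {1..n}"
    have "ball (Z k) (\<kappa> * (\<delta> / \<kappa> ^ k)) \<subseteq> ball x (\<delta> / \<kappa> ^ k) - ball x \<delta>"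
      using B[OF k] by blast
    moreover have "0 < \<delta> / \<kappa> ^ k" using \<open>0 < \<delta>\<close> \<kappa> by simp
    moreover have "\<delta> / \<kappa> ^ k \<le> 1" using scale[OF k] \<open>r \<le> 1\<close> by linarith
    ultimately show "measure lborel (ball (0::'a) 1) * \<kappa> ^ DIM('a)
        \<le> integral (ball (Z k) (\<kappa> * (\<delta> / \<kappa> ^ k))) f"
      unfolding f_def using \<open>0 < \<delta>\<close> \<kappa> \<open>0 \<le> s\<close>
      by (intro integral_norm_diff_powr_scaled_ball_ge) auto
  qed
  also have "\<dots> \<le> integral S f"
  proof (rule sum_integral_disjoint_le_integral[OF _ disjoint])
    show "ball (Z k) (\<kappa> * (\<delta> / \<kappa> ^ k)) \<subseteq> S" if "k \<in> {1..n}" for k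
      using B[OF that] by (auto simp: S_def)
    then show "f integrable_on ball (Z k) (\<kappa> * (\<delta> / \<kappa> ^ k))" if "k \<in> {1..n}" for k
      using integrable that by simp
    show "f integrable_on S" using integrable \<open>S \<in> lmeasurable\<close> by blast
  qed (auto simp: f_def)
  finally show ?thesis unfolding f_def S_def .
qed

lemma integral_norm_diff_powr_ge_ln:
  fixes \<Omega> :: "'a::euclidean_space set" and x :: 'a
  assumes \<Omega>: "\<Omega> \<in> lmeasurable" and \<kappa>: "0 < \<kappa>" "\<kappa> < 1" and "r \<le> 1"
    and annuli: "\<And>\<rho>. 0 < \<rho> \<Longrightarrow> \<rho> < r \<Longrightarrow>
      \<exists>z. ball z (\<kappa> * \<rho>) \<subseteq> \<Omega> \<inter> ball x \<rho> \<and> ball z (\<kappa> * \<rho>) \<inter> ball x (\<kappa> * \<rho>) = {}"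
    and \<delta>: "0 < \<delta>" "\<delta> < \<kappa> * r / 2" and "0 \<le> s"
  shows "measure lborel (ball (0::'a) 1) * \<kappa> ^ DIM('a) / ln (1 / \<kappa>) * ln (\<kappa> * r / 2 / \<delta>)
           \<le> integral (\<Omega> - ball x \<delta>) (\<lambda>y. norm (x - y) powr (- real DIM('a) - 2 * s))"
proof -
  define c where "c = measure lborel (ball (0::'a) 1) * \<kappa> ^ DIM('a)"
  obtain n :: nat where n: "ln (\<kappa> * r / 2 / \<delta>) / ln (1 / \<kappa>) \<le> n" "\<delta> / \<kappa> ^ n \<le> r / 2"
    using exists_nat_ge_ln_ratio[OF \<kappa> \<delta>(1) less_imp_le[OF \<delta>(2)]] \<kappa> by auto
  have "0 < \<kappa> * r" using \<delta> by linarith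
  then have "0 < r" using \<kappa> by (simp add: zero_less_mult_iff)
  then have "\<delta> / \<kappa> ^ n < r" using n(2) by linarith
  have "c / ln (1 / \<kappa>) * ln (\<kappa> * r / 2 / \<delta>) = c * (ln (\<kappa> * r / 2 / \<delta>) / ln (1 / \<kappa>))"
    by simp
  also have "\<dots> \<le> c * n" using n(1) \<kappa> by (intro mult_left_mono) (auto simp: c_def)
  also have "\<dots> \<le> integral (\<Omega> - ball x \<delta>) (\<lambda>y. norm (x - y) powr (- real DIM('a) - 2 * s))"
    unfolding c_def using integral_norm_diff_powr_ge_card_scales[OF \<Omega> \<kappa> \<open>r \<le> 1\<close> annuli \<delta>(1)
        \<open>\<delta> / \<kappa> ^ n < r\<close> \<open>0 \<le> s\<close>] .
  finally show ?thesis unfolding c_def .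
qed

theorem lemma4p2:
  fixes \<Omega> :: "'a::euclidean_space set"
  assumes "bounded \<Omega>" and "open \<Omega>" and "\<Omega> \<noteq> {}" and "is_lipschitz_set \<Omega>"
  shows "\<exists>C0>0. \<exists>\<delta>0. 0 < \<delta>0 \<and> \<delta>0 < 1 \<and>
           (\<forall>\<delta> x s. 0 < \<delta> \<and> \<delta> < \<delta>0 \<and> x \<in> closure \<Omega> \<and> 0 \<le> s \<and> s < 1 \<longrightarrow>
              integral (\<Omega> - ball x \<delta>) (\<lambda>y. norm (x - y) powr (- real DIM('a) - 2 * s))
                \<ge> C0 * ln (\<delta>0 / \<delta>))"
proof -
  obtain \<kappa> r where \<kappa>: "0 < \<kappa>" "\<kappa> < 1" and r: "0 < r" "r \<le> 1"
    and annuli: "\<And>x \<rho>. x \<in> closure \<Omega> \<Longrightarrow> 0 < \<rho> \<Longrightarrow> \<rho> < r \<Longrightarrow>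
       \<exists>z. ball z (\<kappa> * \<rho>) \<subseteq> \<Omega> \<inter> ball x \<rho> \<and> ball z (\<kappa> * \<rho>) \<inter> ball x (\<kappa> * \<rho>) = {}"
    using lipschitz_set_annular_balls[OF assms(1,2,4)] by blast
  define C0 where "C0 = measure lborel (ball (0::'a) 1) * \<kappa> ^ DIM('a) / ln (1 / \<kappa>)"
  define \<delta>0 where "\<delta>0 = \<kappa> * r / 2"
  have "0 < C0" using \<kappa> content_ball_pos[of 1 "0::'a"] by (simp add: C0_def)
  moreover have "0 < \<delta>0" "\<delta>0 < 1"
    using \<kappa> r mult_le_one[of \<kappa> r] by (auto simp: \<delta>0_def)
  moreover have "C0 * ln (\<delta>0 / \<delta>) \<le> integral (\<Omega> - ball x \<delta>) (\<lambda>y. norm (x - y) powr (- real DIM('a) - 2 * s))"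
    if "0 < \<delta>" "\<delta> < \<delta>0" "x \<in> closure \<Omega>" "0 \<le> s" for \<delta> x s
    using integral_norm_diff_powr_ge_ln[OF lmeasurable_open[OF assms(1,2)] \<kappa> r(2) annuli[OF that(3)]]
      that unfolding C0_def \<delta>0_def by blast
  ultimately show ?thesis by blast
qed

end
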